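(* Let $U \in \mathbb{R}^{m \times d_1}$ and $V \in \mathbb{R}^{n \times d_2}$. Let $\rho$ be a $G$-optimal design for the vectors $\{U^\top \mathbf{e}_i : i \in [m]\}$ and let $\zeta$ be a $G$-optimal design for the vectors $\{V^\top \mathbf{e}_j : j \in [n]\}$. Define the distribution $\pi$ on $[m] \times [n]$ by $\pi(i,j) = \rho(i)\,\zeta(j)$. Then $\pi$ is a $G$-optimal design for the vectors $\{V^\top \mathbf{e}_j \otimes U^\top \mathbf{e}_i : i \in [m],\ j \in [n]\}$.
   Context: $\mathbf{e}_i$ denotes the $i$-th standard basis vector and $\otimes$ the Kronecker (tensor) product. For a finite set $\mathcal{A} \subset \mathbb{R}^k$ (here indexed by row indices, column indices, or pairs of them) and a probability distribution $\pi : \mathcal{A} \to [0,1]$, the $G$-value of $\pi$ is $$g(\pi) := \max_{\mathbf{a} \in \mathcal{A}} \Big[\mathbf{a}^\top \Big(\sum_{\mathbf{a}' \in \mathcal{A}} \pi(\mathbf{a}')\, \mathbf{a}' \mathbf{a}'^\top\Big)^{-1} \mathbf{a}\Big].$$ A distribution $\hat\pi$ is called a $G$-optimal design for $\mathcal{A}$ if $g(\hat\pi) = \inf_{\pi} g(\pi)$, the infimum being over all probability distributions on $\mathcal{A}$. *)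

theory Defs
  imports "HOL-Analysis.Analysis" "HOL-Library.Extended_Real"
begin

definition is_distribution :: "('i::finite \<Rightarrow> real) \<Rightarrow> bool" where
  "is_distribution p \<longleftrightarrow> (\<forall>i. 0 \<le> p i) \<and> (\<Sum>i\<in>UNIV. p i) = 1"

definition outer :: "real^'d \<Rightarrow> real^'d \<Rightarrow> real^'d^'d" where
  "outer x y = (\<chi> k l. x $ k * y $ l)"

definition info_matrix :: "('i::finite \<Rightarrow> real^'d) \<Rightarrow> ('i \<Rightarrow> real) \<Rightarrow> real^'d^'d" where
  "info_matrix a p = (\<Sum>i\<in>UNIV. p i *\<^sub>R outer (a i) (a i))"

text \<open>G-value; when the information matrix is singular the inverse does not exist and
  the value is taken to be +infinity.\<close>
definition g_value :: "('i::finite \<Rightarrow> real^'d) \<Rightarrow> ('i \<Rightarrow> real) \<Rightarrow> ereal" where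
  "g_value a p =
     (if invertible (info_matrix a p)
      then ereal (Max (range (\<lambda>i. a i \<bullet> (matrix_inv (info_matrix a p) *v a i))))
      else \<infinity>)"

definition G_optimal :: "('i::finite \<Rightarrow> real^'d) \<Rightarrow> ('i \<Rightarrow> real) \<Rightarrow> bool" where
  "G_optimal a p \<longleftrightarrow> is_distribution p \<and>
     g_value a p = (INF q \<in> {q. is_distribution q}. g_value a q)"

definition kron :: "real^'a \<Rightarrow> real^'b \<Rightarrow> real^('a \<times> 'b)" where
  "kron x y = (\<chi> p. x $ fst p * y $ snd p)"

end

theory Submission
  imports Defs
begin

(*
  For a design p with invertible information matrix M, the leverages a_i' M^-1 a_i have
  p-average tr (M^-1 M) = d, so g(p) >= d for every design.  Conversely a design maximizing
  det M has all leverages <= d (the easy half of the Kiefer-Wolfowitz theorem), so a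
  G-optimal design with invertible M has all its leverages <= d.

  The information matrix of the product design rho x zeta for the vectors v_j (x) u_i is the
  Kronecker product M_V (x) M_U; its inverse is M_V^-1 (x) M_U^-1, so the leverage of
  v_j (x) u_i is the product of the leverages of v_j and u_i, hence at most d2 d1, which is
  the dimension and thus the least possible G-value.  If one factor design is singular,
  G-optimality forces all factor vectors into a proper subspace; then all product vectors
  lie in a proper subspace too, every design is singular and every design is G-optimal.
*)

section \<open>Matrix facts\<close>

lemma matrix_inv_right:
  fixes A :: "'a::semiring_1^'n^'m"
  shows "invertible A \<Longrightarrow> A ** matrix_inv A = mat 1"
  unfolding invertible_def matrix_inv_def by (rule someI2_ex) auto

lemma matrix_inv_left:
  fixes A :: "'a::semiring_1^'n^'m"
  shows "invertible A \<Longrightarrow> matrix_inv A ** A = mat 1"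
  unfolding invertible_def matrix_inv_def by (rule someI2_ex) auto

lemma det_scaleR: "det (c *\<^sub>R A) = c ^ CARD('n) * det (A :: real^'n^'n)"
proof -
  have "c *\<^sub>R A = (\<chi> i. c *s row i A)" by (simp add: vec_eq_iff row_def)
  then show ?thesis using det_rows_mul[of "\<lambda>_. c" "\<lambda>i. row i A"] by (simp add: row_def)
qed

lemma continuous_on_det [continuous_intros]:
  fixes f :: "'a::topological_space \<Rightarrow> real^'n^'n"
  assumes "continuous_on S f"
  shows "continuous_on S (\<lambda>x. det (f x))"
  unfolding det_def by (intro continuous_intros continuous_on_component assms)

lemma det_rows_add_multiple_of_row:
  fixes A :: "'a::comm_ring_1^'n^'n"
  assumes "finite S" "k \<notin> S"
  shows "det (\<chi> i. if i = k then b else if i \<in> S then row i A + c$i *s b else row i A)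
       = det (\<chi> i. if i = k then b else row i A)"
  using assms
proof (induction S rule: finite_induct)
  case empty
  then show ?case by (simp cong: if_cong)
next
  case (insert l S)
  define B where "B = (\<chi> i. if i = k then b else if i \<in> S then row i A + c$i *s b else row i A)"
  have "l \<noteq> k" using insert by auto
  have "(\<chi> i. if i = k then b else if i \<in> insert l S then row i A + c$i *s b else row i A)
      = (\<chi> i. if i = l then row l B + c$l *s row k B else row i B)"
    using \<open>l \<noteq> k\<close> insert(2) by (auto simp: B_def vec_eq_iff row_def)
  then show ?case
    using det_row_operation[OF \<open>l \<noteq> k\<close>, of B "c$l"] insert by (simp add: B_def)
qed

lemma det_rows_add_rank_one:
  fixes A :: "'a::comm_ring_1^'n^'n"
  assumes "finite S"
  shows "det (\<chi> i. if i \<in> S then row i A + c$i *s b else row i A)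
       = det A + (\<Sum>k\<in>S. c$k * det (\<chi> i. if i = k then b else row i A))"
  using assms
proof (induction S rule: finite_induct)
  case empty
  have "(\<chi> i. row i A) = A" by (simp add: vec_eq_iff row_def)
  then show ?case by simp
next
  case (insert k S)
  define R where "R i = (if i \<in> S then row i A + c$i *s b else row i A)" for i
  have "det (\<chi> i. if i \<in> insert k S then row i A + c$i *s b else row i A)
      = det (\<chi> i. if i = k then row k A + c$k *s b else R i)"
    by (rule arg_cong[where f = det]) (auto simp: R_def vec_eq_iff)
  also have "\<dots> = det (\<chi> i. if i = k then row k A else R i) + c$k * det (\<chi> i. if i = k then b else R i)"
    by (simp add: det_row_add det_row_mul)
  also have "(\<chi> i. if i = k then row k A else R i) = (\<chi> i. R i)"
    using insert(2) by (simp add: vec_eq_iff R_def)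
  also have "det (\<chi> i. if i = k then b else R i) = det (\<chi> i. if i = k then b else row i A)"
    unfolding R_def by (rule det_rows_add_multiple_of_row[OF insert(1,2)])
  finally show ?case
    using insert by (simp add: R_def algebra_simps)
qed

text \<open>The matrix determinant lemma; \<open>x\<close> stands for \<open>(transpose A)\<^sup>-\<^sup>1 b\<close>, so that \<open>A\<close> need
  not be invertible.\<close>
lemma det_add_outer:
  fixes A :: "real^'n^'n"
  assumes "transpose A *v x = b"
  shows "det (A + outer c b) = det A * (1 + c \<bullet> x)"
proof -
  have "A + outer c b = (\<chi> i. if i \<in> UNIV then row i A + c$i *s b else row i A)"
    by (simp add: vec_eq_iff outer_def row_def)
  moreover have "det (\<chi> i. if i = k then b else row i A) = x$k * det A" for k
  proof -
    have "(\<chi> i. if i = k then b else row i A)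
        = transpose (\<chi> i j. if j = k then (transpose A *v x)$i else transpose A $ i $ j)"
      using assms by (simp add: vec_eq_iff transpose_def row_def)
    then show ?thesis using cramer_lemma[where A = "transpose A" and k = k and x = x] by simp
  qed
  ultimately show ?thesis
    using det_rows_add_rank_one[of UNIV A c b] by (simp add: inner_vec_def sum_distrib_left algebra_simps)
qed

lemma Bernoulli_inequality_sharp:
  fixes g :: real
  assumes "\<And>s. s > 0 \<Longrightarrow> 1 + s * g \<le> (1 + s) ^ n"
  shows "g \<le> real n"
proof (rule ccontr)
  assume "\<not> g \<le> real n"
  have "((\<lambda>s. (1 + s) ^ n - s * g) has_real_derivative real n - g) (at 0)"
    by (intro derivative_eq_intros) auto
  from DERIV_neg_dec_right[OF this] \<open>\<not> g \<le> real n\<close>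
  obtain d where "d > 0" and dec: "\<forall>h>0. h < d \<longrightarrow> (1 + h) ^ n - h * g < 1"
    by auto
  then have "(1 + d / 2) ^ n - d / 2 * g < 1"
    using dec[rule_format, of "d / 2"] by simp
  with assms[of "d / 2"] \<open>d > 0\<close> show False
    by linarith
qed

section \<open>Information matrices and leverages\<close>

definition leverage :: "('i::finite \<Rightarrow> real^'d) \<Rightarrow> ('i \<Rightarrow> real) \<Rightarrow> real^'d \<Rightarrow> real" where
  "leverage a p x = x \<bullet> (matrix_inv (info_matrix a p) *v x)"

lemma info_matrix_component:
  "info_matrix a p $ k $ l = (\<Sum>i\<in>UNIV. p i * (a i $ k * a i $ l))"
  unfolding info_matrix_def outer_def by (simp add: sum_component)

lemma transpose_info_matrix [simp]: "transpose (info_matrix a p) = info_matrix a p"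
  by (simp add: vec_eq_iff transpose_def info_matrix_component mult.commute)

lemma info_matrix_mult_vec:
  "info_matrix a p *v y = (\<Sum>i\<in>UNIV. (p i * (a i \<bullet> y)) *\<^sub>R a i)"
proof -
  have "(\<Sum>l\<in>UNIV. (\<Sum>i\<in>UNIV. p i * (a i $ k * a i $ l)) * y $ l)
      = (\<Sum>i\<in>UNIV. \<Sum>l\<in>UNIV. p i * (a i $ l * y $ l) * a i $ k)" for k
    by (subst sum.swap) (simp only: sum_distrib_right, intro sum.cong refl, simp add: mult_ac)
  then show ?thesis
    by (simp add: vec_eq_iff matrix_vector_mult_def info_matrix_component inner_vec_def
        sum_component sum_distrib_right sum_distrib_left)
qed

lemma inner_info_matrix_mult_vec:
  "y \<bullet> (info_matrix a p *v y) = (\<Sum>i\<in>UNIV. p i * (a i \<bullet> y)\<^sup>2)"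
  by (simp add: info_matrix_mult_vec inner_sum_right power2_eq_square inner_commute mult_ac)

lemma info_matrix_linear:
  "info_matrix a (\<lambda>i. x * p i + y * q i) = x *\<^sub>R info_matrix a p + y *\<^sub>R info_matrix a q"
  unfolding info_matrix_def by (simp add: scaleR_add_left sum.distrib scaleR_sum_right)

lemma info_matrix_point_mass:
  fixes a :: "'i::finite \<Rightarrow> real^'d::finite"
  shows "info_matrix a (\<lambda>i. if i = j then 1 else 0) = outer (a j) (a j)"
  unfolding info_matrix_def by (subst sum.mono_neutral_right[of UNIV "{j}"]) auto

lemma sum_leverage_eq_dim:
  fixes a :: "'i::finite \<Rightarrow> real^'d"
  assumes "invertible (info_matrix a p)"
  shows "(\<Sum>i\<in>UNIV. p i * leverage a p (a i)) = real CARD('d)"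
proof -
  let ?M = "info_matrix a p"
  let ?N = "matrix_inv ?M"
  have "(\<Sum>i\<in>UNIV. p i * leverage a p (a i))
      = (\<Sum>i\<in>UNIV. \<Sum>k\<in>UNIV. \<Sum>l\<in>UNIV. ?N$k$l * (p i * (a i $ l * a i $ k)))"
    by (simp add: leverage_def inner_vec_def matrix_vector_mult_def sum_distrib_left algebra_simps)
  also have "\<dots> = (\<Sum>k\<in>UNIV. \<Sum>l\<in>UNIV. \<Sum>i\<in>UNIV. ?N$k$l * (p i * (a i $ l * a i $ k)))"
    by (subst sum.swap) (intro sum.cong refl sum.swap)
  also have "\<dots> = trace (?N ** ?M)"
    by (simp add: trace_def matrix_matrix_mult_def info_matrix_component sum_distrib_left)
  also have "\<dots> = real CARD('d)"
    by (simp add: matrix_inv_left[OF assms] trace_I)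
  finally show ?thesis .
qed

lemma leverage_nonneg:
  assumes "\<And>i. 0 \<le> p i" "invertible (info_matrix a p)"
  shows "0 \<le> leverage a p x"
proof -
  let ?M = "info_matrix a p"
  define y where "y = matrix_inv ?M *v x"
  have "x = ?M *v y"
    by (simp add: y_def matrix_vector_mul_assoc matrix_inv_right[OF assms(2)])
  then have "leverage a p x = y \<bullet> (?M *v y)"
    by (simp add: leverage_def y_def inner_commute)
  also have "\<dots> = (\<Sum>i\<in>UNIV. p i * (a i \<bullet> y)\<^sup>2)"
    by (rule inner_info_matrix_mult_vec)
  also have "\<dots> \<ge> 0"
    using assms(1) by (intro sum_nonneg) auto
  finally show ?thesis .
qed

section \<open>G-optimality\<close>

lemma is_distribution_uniform: "is_distribution (\<lambda>i::'i::finite. 1 / real CARD('i))"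
  by (simp add: is_distribution_def)

lemma g_value_le_ereal_iff:
  assumes "invertible (info_matrix a p)"
  shows "g_value a p \<le> ereal c \<longleftrightarrow> (\<forall>i. leverage a p (a i) \<le> c)"
  using assms by (simp add: g_value_def leverage_def)

lemma dim_le_g_value:
  fixes a :: "'i::finite \<Rightarrow> real^'d::finite"
  assumes "is_distribution p"
  shows "ereal (real CARD('d)) \<le> g_value a p"
proof (cases "invertible (info_matrix a p)")
  case False
  then show ?thesis by (simp add: g_value_def)
next
  case True
  define h where "h i = leverage a p (a i)" for i
  have "real CARD('d) = (\<Sum>i\<in>UNIV. p i * h i)"
    using sum_leverage_eq_dim[OF True] by (simp add: h_def)
  also have "\<dots> \<le> (\<Sum>i\<in>UNIV. p i * Max (range h))"
    using assms unfolding is_distribution_def by (intro sum_mono mult_left_mono) auto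
  also have "\<dots> = Max (range h)"
    using assms by (simp add: is_distribution_def sum_distrib_right[symmetric])
  finally show ?thesis
    using True by (simp add: g_value_def h_def leverage_def)
qed

lemma G_optimal_if_g_value_le_dim:
  fixes a :: "'i::finite \<Rightarrow> real^'d::finite"
  assumes "is_distribution p" "g_value a p \<le> ereal (real CARD('d))"
  shows "G_optimal a p"
  unfolding G_optimal_def
proof (intro conjI assms antisym)
  show "g_value a p \<le> (INF q \<in> {q. is_distribution q}. g_value a q)"
    using assms(2) dim_le_g_value by (intro INF_greatest) (blast intro: order.trans)
  show "(INF q \<in> {q. is_distribution q}. g_value a q) \<le> g_value a p"
    using assms(1) by (auto intro: INF_lower)
qed

lemma not_invertible_info_matrix_if_common_kernel:
  fixes a :: "'i::finite \<Rightarrow> real^'d::finite"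
  assumes "z \<noteq> 0" "\<And>i. a i \<bullet> z = 0"
  shows "\<not> invertible (info_matrix a p)"
proof
  assume "invertible (info_matrix a p)"
  then have "z = matrix_inv (info_matrix a p) *v (info_matrix a p *v z)"
    by (simp add: matrix_vector_mul_assoc matrix_inv_left)
  also have "info_matrix a p *v z = 0"
    by (simp add: info_matrix_mult_vec assms(2))
  finally show False
    using assms(1) by simp
qed

lemma G_optimal_if_common_kernel:
  fixes a :: "'i::finite \<Rightarrow> real^'d::finite"
  assumes "is_distribution p" "z \<noteq> 0" "\<And>i. a i \<bullet> z = 0"
  shows "G_optimal a p"
proof -
  have infinite: "g_value a q = \<infinity>" for q
    using not_invertible_info_matrix_if_common_kernel[OF assms(2,3)] by (simp add: g_value_def)
  have "(INF q \<in> {q. is_distribution q}. g_value a q) = \<infinity>"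
    unfolding infinite using assms(1) by (intro INF_const) blast
  then show ?thesis
    using assms(1) infinite by (simp add: G_optimal_def)
qed

text \<open>A G-optimal design is singular only if every design is, in particular the uniform one, whose
  information matrix has the common kernel of the \<open>a i\<close> as its kernel.\<close>
lemma common_kernel_if_G_optimal_singular:
  fixes a :: "'i::finite \<Rightarrow> real^'d::finite"
  assumes "G_optimal a p" "\<not> invertible (info_matrix a p)"
  obtains z where "z \<noteq> 0" "\<And>i. a i \<bullet> z = 0"
proof -
  define uniform where "uniform = (\<lambda>i::'i. 1 / real CARD('i))"
  have "(INF q \<in> {q. is_distribution q}. g_value a q) = \<infinity>"
    using assms by (simp add: G_optimal_def g_value_def)
  then have "g_value a uniform = \<infinity>"
    using is_distribution_uniform unfolding uniform_def
    by (metis INF_lower mem_Collect_eq top.extremum_uniqueI top_ereal_def)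
  then have "\<not> invertible (info_matrix a uniform)"
    by (auto simp: g_value_def)
  then obtain z where "info_matrix a uniform *v z = 0" "z \<noteq> 0"
    unfolding invertible_left_inverse matrix_left_invertible_ker by blast
  then have "(\<Sum>i\<in>UNIV. uniform i * (a i \<bullet> z)\<^sup>2) = 0"
    using inner_info_matrix_mult_vec[of z a uniform] by simp
  then have "a i \<bullet> z = 0" for i
    by (subst (asm) sum_nonneg_eq_0_iff) (auto simp: uniform_def)
  with \<open>z \<noteq> 0\<close> show ?thesis using that by blast
qed

section \<open>D-optimal designs\<close>

text \<open>The absolute value is harmless, as information matrices are positive semidefinite; it
  spares proving \<open>det (info_matrix a p) \<ge> 0\<close>.\<close>
definition D_optimal :: "('i::finite \<Rightarrow> real^'d) \<Rightarrow> ('i \<Rightarrow> real) \<Rightarrow> bool" where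
  "D_optimal a p \<longleftrightarrow> is_distribution p \<and>
     (\<forall>q. is_distribution q \<longrightarrow> \<bar>det (info_matrix a q)\<bar> \<le> \<bar>det (info_matrix a p)\<bar>)"

lemma compact_distributions: "compact {x :: real^'i. is_distribution (\<lambda>i. x $ i)}"
proof -
  let ?K = "{x :: real^'i. is_distribution (\<lambda>i. x $ i)}"
  have "?K \<subseteq> cbox 0 1"
  proof
    fix x :: "real^'i"
    assume "x \<in> ?K"
    then have "x $ i \<le> 1" for i
      using member_le_sum[of i UNIV "\<lambda>i. x $ i"] by (simp add: is_distribution_def)
    with \<open>x \<in> ?K\<close> show "x \<in> cbox 0 1"
      by (simp add: is_distribution_def mem_box_cart)
  qed
  moreover have "closed ?K"
    unfolding is_distribution_def
    by (intro closed_Collect_conj closed_Collect_all closed_Collect_le closed_Collect_eq continuous_intros)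
  ultimately show ?thesis
    by (metis bounded_cbox bounded_subset compact_eq_bounded_closed)
qed

lemma exists_D_optimal:
  fixes a :: "'i::finite \<Rightarrow> real^'d::finite"
  obtains p where "D_optimal a p"
proof -
  let ?K = "{x :: real^'i. is_distribution (\<lambda>i. x $ i)}"
  have "continuous_on ?K (\<lambda>x. \<bar>det (info_matrix a (\<lambda>i. x $ i))\<bar>)"
    unfolding info_matrix_def by (intro continuous_intros)
  moreover have "(\<chi> i. 1 / real CARD('i)) \<in> ?K"
    by (simp add: is_distribution_def)
  ultimately obtain x where "x \<in> ?K"
    and max: "\<And>y. y \<in> ?K \<Longrightarrow> \<bar>det (info_matrix a (\<lambda>i. y $ i))\<bar> \<le> \<bar>det (info_matrix a (\<lambda>i. x $ i))\<bar>"
    using continuous_attains_sup[OF compact_distributions] by blast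
  have "\<bar>det (info_matrix a q)\<bar> \<le> \<bar>det (info_matrix a (\<lambda>i. x $ i))\<bar>" if "is_distribution q" for q
    using that max[of "\<chi> i. q i"] by (simp add: vec_lambda_inverse)
  with \<open>x \<in> ?K\<close> have "D_optimal a (\<lambda>i. x $ i)"
    by (simp add: D_optimal_def)
  then show ?thesis
    by (rule that)
qed

text \<open>The easy half of the Kiefer--Wolfowitz theorem: moving the mass \<open>s / (1 + s)\<close> of a
  D-optimal design to the point \<open>i\<close> multiplies the determinant by \<open>(1 + s g) / (1 + s)^d\<close>,
  where \<open>g\<close> is the leverage of \<open>a i\<close>; so \<open>1 + s g \<le> (1 + s)^d\<close> for all \<open>s > 0\<close>.\<close>
lemma leverage_le_dim_if_D_optimal:
  fixes a :: "'i::finite \<Rightarrow> real^'d::finite"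
  assumes "D_optimal a p" and invertible: "invertible (info_matrix a p)"
  shows "leverage a p (a i) \<le> real CARD('d)"
proof (rule Bernoulli_inequality_sharp)
  have p: "is_distribution p"
    and maximizing: "\<And>q. is_distribution q \<Longrightarrow> \<bar>det (info_matrix a q)\<bar> \<le> \<bar>det (info_matrix a p)\<bar>"
    using \<open>D_optimal a p\<close> by (simp_all add: D_optimal_def)
  let ?M = "info_matrix a p"
  let ?g = "leverage a p (a i)"
  fix s :: real
  assume "s > 0"
  define q where "q j = 1 / (1 + s) * p j + s / (1 + s) * (if j = i then 1 else 0)" for j
  have "(\<Sum>j\<in>UNIV. q j) = 1 / (1 + s) * (\<Sum>j\<in>UNIV. p j) + s / (1 + s)"
    unfolding q_def by (simp add: sum.distrib sum_distrib_left[symmetric] del: times_divide_eq_left)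
  with p \<open>s > 0\<close> have "is_distribution q"
    by (simp add: is_distribution_def q_def add_divide_distrib[symmetric])
  have "info_matrix a q = (1 / (1 + s)) *\<^sub>R (?M + outer (s *\<^sub>R a i) (a i))"
    using \<open>s > 0\<close> unfolding q_def info_matrix_linear info_matrix_point_mass
    by (simp add: vec_eq_iff outer_def add_divide_distrib mult.assoc)
  moreover have "transpose ?M *v (matrix_inv ?M *v a i) = a i"
    by (simp add: matrix_vector_mul_assoc matrix_inv_right[OF invertible])
  ultimately have "det (info_matrix a q) = (1 / (1 + s)) ^ CARD('d) * (det ?M * (1 + s * ?g))"
    by (simp add: det_scaleR det_add_outer leverage_def)
  then have "\<bar>det (info_matrix a q)\<bar> = \<bar>det ?M\<bar> * \<bar>1 + s * ?g\<bar> / (1 + s) ^ CARD('d)"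
    using \<open>s > 0\<close> by (simp add: abs_mult power_divide)
  then have "\<bar>det ?M\<bar> * \<bar>1 + s * ?g\<bar> \<le> \<bar>det ?M\<bar> * (1 + s) ^ CARD('d)"
    using maximizing[OF \<open>is_distribution q\<close>] \<open>s > 0\<close> by (simp add: pos_divide_le_eq)
  then have "\<bar>1 + s * ?g\<bar> \<le> (1 + s) ^ CARD('d)"
    by (rule mult_left_le_imp_le) (use invertible in \<open>simp add: invertible_det_nz\<close>)
  then show "1 + s * ?g \<le> (1 + s) ^ CARD('d)"
    by (rule order.trans[OF abs_ge_self])
qed

lemma leverage_le_dim_if_G_optimal:
  fixes a :: "'i::finite \<Rightarrow> real^'d::finite"
  assumes "G_optimal a p" "invertible (info_matrix a p)"
  shows "leverage a p (a i) \<le> real CARD('d)"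
proof -
  obtain q where "D_optimal a q"
    using exists_D_optimal by blast
  then have q: "is_distribution q" "\<bar>det (info_matrix a p)\<bar> \<le> \<bar>det (info_matrix a q)\<bar>"
    using assms(1) by (simp_all add: D_optimal_def G_optimal_def)
  then have "invertible (info_matrix a q)"
    using assms(2) by (simp add: invertible_det_nz)
  then have "g_value a q \<le> ereal (real CARD('d))"
    using leverage_le_dim_if_D_optimal[OF \<open>D_optimal a q\<close>] by (simp add: g_value_le_ereal_iff)
  moreover have "g_value a p \<le> g_value a q"
    using assms(1) q(1) unfolding G_optimal_def by (metis INF_lower mem_Collect_eq)
  ultimately show ?thesis
    using assms(2) g_value_le_ereal_iff by (metis order.trans)
qed

section \<open>Kronecker products\<close>

lemma sum_UNIV_prod:
  "(\<Sum>r\<in>(UNIV::('a::finite \<times> 'b::finite) set). f r) = (\<Sum>i\<in>UNIV. \<Sum>j\<in>UNIV. f (i, j))"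
  by (simp add: sum.cartesian_product UNIV_Times_UNIV[symmetric] del: UNIV_Times_UNIV)

definition kron_mat :: "real^'c^'a \<Rightarrow> real^'d^'b \<Rightarrow> real^('c \<times> 'd)^('a \<times> 'b)" where
  "kron_mat A B = (\<chi> r s. A $ fst r $ fst s * B $ snd r $ snd s)"

lemma kron_mat_mult: "kron_mat A B ** kron_mat C D = kron_mat (A ** C) (B ** D)"
  by (simp add: vec_eq_iff kron_mat_def matrix_matrix_mult_def sum_UNIV_prod sum_product mult_ac)

lemma kron_mat_mat_1: "kron_mat (mat 1) (mat 1) = mat 1"
  by (auto simp: vec_eq_iff kron_mat_def mat_def prod_eq_iff)

lemma kron_mat_mult_kron: "kron_mat A B *v kron x y = kron (A *v x) (B *v y)"
  by (simp add: vec_eq_iff kron_mat_def kron_def matrix_vector_mult_def sum_UNIV_prod sum_product mult_ac)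

lemma inner_kron: "kron x y \<bullet> kron z w = (x \<bullet> z) * (y \<bullet> w)"
  by (simp add: kron_def inner_vec_def sum_UNIV_prod sum_product mult_ac)

lemma kron_eq_0_iff: "kron x y = 0 \<longleftrightarrow> x = 0 \<or> y = 0"
  by (auto simp: vec_eq_iff kron_def)

lemma
  fixes A :: "real^'a^'a" and B :: "real^'b^'b"
  assumes "invertible A" "invertible B"
  shows invertible_kron_mat: "invertible (kron_mat A B)"
    and matrix_inv_kron_mat: "matrix_inv (kron_mat A B) = kron_mat (matrix_inv A) (matrix_inv B)"
proof -
  let ?K = "kron_mat (matrix_inv A) (matrix_inv B)"
  have left: "?K ** kron_mat A B = mat 1" and right: "kron_mat A B ** ?K = mat 1"
    by (simp_all add: kron_mat_mult matrix_inv_left matrix_inv_right assms kron_mat_mat_1)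
  then show "invertible (kron_mat A B)"
    unfolding invertible_def by blast
  then have "matrix_inv (kron_mat A B) = matrix_inv (kron_mat A B) ** (kron_mat A B ** ?K)"
    by (simp add: right)
  also have "\<dots> = ?K"
    by (simp add: matrix_mul_assoc matrix_inv_left \<open>invertible (kron_mat A B)\<close>)
  finally show "matrix_inv (kron_mat A B) = ?K" .
qed

lemma info_matrix_kron:
  fixes u :: "'m::finite \<Rightarrow> real^'d1" and v :: "'n::finite \<Rightarrow> real^'d2"
  shows "info_matrix (\<lambda>(i, j). kron (v j) (u i)) (\<lambda>(i, j). \<rho> i * \<zeta> j)
       = kron_mat (info_matrix v \<zeta>) (info_matrix u \<rho>)"
  by (simp add: vec_eq_iff kron_mat_def info_matrix_component kron_def sum_UNIV_prod sum_product
      mult_ac sum.swap[of _ "UNIV::'m set"])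

lemma leverage_kron:
  fixes u :: "'m::finite \<Rightarrow> real^'d1" and v :: "'n::finite \<Rightarrow> real^'d2"
  assumes "invertible (info_matrix u \<rho>)" "invertible (info_matrix v \<zeta>)"
  shows "leverage (\<lambda>(i, j). kron (v j) (u i)) (\<lambda>(i, j). \<rho> i * \<zeta> j) (kron x y)
       = leverage v \<zeta> x * leverage u \<rho> y"
  using assms by (simp add: leverage_def info_matrix_kron matrix_inv_kron_mat kron_mat_mult_kron inner_kron)

lemma is_distribution_product:
  assumes "is_distribution \<rho>" "is_distribution \<zeta>"
  shows "is_distribution (\<lambda>(i, j). \<rho> i * \<zeta> j)"
  using assms by (auto simp: is_distribution_def sum_UNIV_prod sum_product[symmetric])

lemma common_kernel_kron_if_G_optimal_singular:
  fixes u :: "'m::finite \<Rightarrow> real^'d1::finite" and v :: "'n::finite \<Rightarrow> real^'d2::finite"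
  assumes u: "G_optimal u \<rho>" and v: "G_optimal v \<zeta>"
    and singular: "\<not> (invertible (info_matrix u \<rho>) \<and> invertible (info_matrix v \<zeta>))"
  obtains z where "z \<noteq> 0" "\<And>i j. kron (v j) (u i) \<bullet> z = 0"
proof -
  from singular consider "\<not> invertible (info_matrix u \<rho>)" | "\<not> invertible (info_matrix v \<zeta>)"
    by blast
  then show ?thesis
  proof cases
    case 1
    then obtain y where "y \<noteq> 0" "\<And>i. u i \<bullet> y = 0"
      using common_kernel_if_G_optimal_singular[OF u] by blast
    then show ?thesis
      using that[of "kron (axis k 1) y"] by (simp add: inner_kron kron_eq_0_iff)
  next
    case 2
    then obtain y where "y \<noteq> 0" "\<And>j. v j \<bullet> y = 0"
      using common_kernel_if_G_optimal_singular[OF v] by blast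
    then show ?thesis
      using that[of "kron y (axis k 1)"] by (simp add: inner_kron kron_eq_0_iff)
  qed
qed

theorem G_optimal_kron:
  fixes u :: "'m::finite \<Rightarrow> real^'d1::finite" and v :: "'n::finite \<Rightarrow> real^'d2::finite"
  assumes u: "G_optimal u \<rho>" and v: "G_optimal v \<zeta>"
  shows "G_optimal (\<lambda>(i, j). kron (v j) (u i)) (\<lambda>(i, j). \<rho> i * \<zeta> j)"
proof -
  have "is_distribution \<rho>" "is_distribution \<zeta>"
    using u v by (simp_all add: G_optimal_def)
  then have distribution: "is_distribution (\<lambda>(i, j). \<rho> i * \<zeta> j)"
    by (rule is_distribution_product)
  show ?thesis
  proof (cases "invertible (info_matrix u \<rho>) \<and> invertible (info_matrix v \<zeta>)")
    case True
    then have "invertible (info_matrix (\<lambda>(i, j). kron (v j) (u i)) (\<lambda>(i, j). \<rho> i * \<zeta> j))"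
      by (simp add: info_matrix_kron invertible_kron_mat)
    moreover have "leverage v \<zeta> (v j) * leverage u \<rho> (u i) \<le> real CARD('d2) * real CARD('d1)" for i j
      using True \<open>is_distribution \<rho>\<close> \<open>is_distribution \<zeta>\<close> unfolding is_distribution_def
      by (intro mult_mono leverage_le_dim_if_G_optimal[OF u] leverage_le_dim_if_G_optimal[OF v]
          leverage_nonneg) auto
    ultimately show ?thesis
      using True by (intro G_optimal_if_g_value_le_dim distribution)
        (simp add: g_value_le_ereal_iff leverage_kron)
  next
    case False
    then obtain z where "z \<noteq> 0" "\<And>i j. kron (v j) (u i) \<bullet> z = 0"
      using common_kernel_kron_if_G_optimal_singular[OF u v] by blast
    then show ?thesis
      by (intro G_optimal_if_common_kernel[OF distribution]) auto
  qed
qed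

theorem mainTheorem1:
  fixes U :: "real^'d1^'m" and V :: "real^'d2^'n"
    and \<rho> :: "'m \<Rightarrow> real" and \<zeta> :: "'n \<Rightarrow> real"
  assumes "G_optimal (\<lambda>i. transpose U *v axis i 1) \<rho>"
    and "G_optimal (\<lambda>j. transpose V *v axis j 1) \<zeta>"
  shows "G_optimal (\<lambda>(i, j). kron (transpose V *v axis j 1) (transpose U *v axis i 1))
           (\<lambda>(i, j). \<rho> i * \<zeta> j)"
  using G_optimal_kron[OF assms] .

end
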